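(* Let $\xi\in\mathfrak{so}(n)\times\mathfrak{so}(k)$. The solution of $$\dot S(t)=-\tfrac12\,\mathrm{pr}_{\mathfrak p}\circ\mathrm{ad}_{\mathrm{Ad}_{\exp(t\xi_{\mathfrak h})}(\xi_{\mathfrak p})}\circ S(t),\quad S(0)=\mathrm{id}_{\mathfrak p}$$ is $S\colon I\to O(\mathfrak p)$, $S(t)=\mathrm{Ad}_{\exp(t\xi_{\mathfrak h})}\circ\exp\!\big(-t(\mathrm{ad}_{\xi_{\mathfrak h}}+\tfrac12\,\mathrm{pr}_{\mathfrak p}\circ\mathrm{ad}_{\xi_{\mathfrak p}})\big)$.
   Context: Fix $X\in\mathrm{St}(n,k)=\{Y\in\mathbb{R}^{n\times k}:Y^\top Y=I_k\}$. On $\mathfrak g=\mathfrak{so}(n)\times\mathfrak{so}(k)$ (Lie algebra of $O(n)\times O(k)$) use $\langle(\Omega_1,\Psi_1),(\Omega_2,\Psi_2)\rangle=-\operatorname{tr}(\Omega_1\Omega_2)+2\operatorname{tr}(\Psi_1\Psi_2)$; $\mathfrak h=\{(\Omega,\eta):\Omega X=X\eta\}$ is the Lie algebra of the stabilizer $H$ of $X$ under $(R,\theta)\cdot Y=RY\theta^\top$, $\mathfrak p=\mathfrak h^\perp$, $\mathrm{pr}_{\mathfrak p}$ the projection onto $\mathfrak p$ along $\mathfrak h$, and $\xi_{\mathfrak h},\xi_{\mathfrak p}$ the components of $\xi$. $\mathrm{ad}_YZ=[Y,Z]$, $\mathrm{Ad}$ is conjugation, $O(\mathfrak p)$ the isometry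 group of $(\mathfrak p,\langle\cdot,\cdot\rangle)$; in the formula for $S(t)$ the operators are restricted to $\mathfrak p$. *)

theory Defs
  imports "HOL-Analysis.Analysis"
begin

text \<open>Elements of so(n) x so(k) are pairs of real square matrices; the index
  types 'n and 'k are arbitrary finite types (n = CARD('n), k = CARD('k)).\<close>

type_synonym ('n,'k) gl = "(real^'n::finite^'n) \<times> (real^'k::finite^'k)"

definition skew :: "real^'m::finite^'m \<Rightarrow> bool" where
  "skew M \<longleftrightarrow> transpose M = - M"

definition stiefel :: "(real^'k::finite^'n::finite) set" where
  "stiefel = {Y. transpose Y ** Y = mat 1}"

definition gset :: "('n::finite,'k::finite) gl set" where
  "gset = {(Om, Psi). skew Om \<and> skew Psi}"

definition ip :: "('n::finite,'k::finite) gl \<Rightarrow> ('n::finite,'k::finite) gl \<Rightarrow> real" where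
  "ip a b = - trace (fst a ** fst b) + 2 * trace (snd a ** snd b)"

text \<open>Lie algebra of the stabilizer of X.\<close>
definition hset :: "real^'k::finite^'n::finite \<Rightarrow> ('n::finite,'k::finite) gl set" where
  "hset X = {(Om, eta) \<in> gset. Om ** X = X ** eta}"

definition pset :: "real^'k::finite^'n::finite \<Rightarrow> ('n::finite,'k::finite) gl set" where
  "pset X = {z \<in> gset. \<forall>h \<in> hset X. ip z h = 0}"

definition pr_p :: "real^'k::finite^'n::finite \<Rightarrow> ('n::finite,'k::finite) gl \<Rightarrow> ('n::finite,'k::finite) gl" where
  "pr_p X z = (THE q. q \<in> pset X \<and> z - q \<in> hset X)"

definition comp_h :: "real^'k::finite^'n::finite \<Rightarrow> ('n::finite,'k::finite) gl \<Rightarrow> ('n::finite,'k::finite) gl" where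
  "comp_h X z = z - pr_p X z"

definition comp_p :: "real^'k::finite^'n::finite \<Rightarrow> ('n::finite,'k::finite) gl \<Rightarrow> ('n::finite,'k::finite) gl" where
  "comp_p X z = pr_p X z"

definition ad :: "('n::finite,'k::finite) gl \<Rightarrow> ('n::finite,'k::finite) gl \<Rightarrow> ('n::finite,'k::finite) gl" where
  "ad a b = (fst a ** fst b - fst b ** fst a, snd a ** snd b - snd b ** snd a)"

primrec mpow :: "real^'m::finite^'m \<Rightarrow> nat \<Rightarrow> real^'m::finite^'m" where
  "mpow M 0 = mat 1"
| "mpow M (Suc m) = M ** mpow M m"

definition mexp :: "real^'m::finite^'m \<Rightarrow> real^'m::finite^'m" where
  "mexp M = (\<Sum>m. (1 / fact m) *\<^sub>R mpow M m)"

definition gexp :: "('n::finite,'k::finite) gl \<Rightarrow> ('n::finite,'k::finite) gl" where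
  "gexp a = (mexp (fst a), mexp (snd a))"

definition Ad :: "('n::finite,'k::finite) gl \<Rightarrow> ('n::finite,'k::finite) gl \<Rightarrow> ('n::finite,'k::finite) gl" where
  "Ad g b = (fst g ** fst b ** matrix_inv (fst g), snd g ** snd b ** matrix_inv (snd g))"

definition opexp :: "('v::real_normed_vector \<Rightarrow> 'v) \<Rightarrow> 'v \<Rightarrow> 'v" where
  "opexp A v = (\<Sum>m. (1 / fact m) *\<^sub>R (A ^^ m) v)"

definition Op :: "real^'k::finite^'n::finite \<Rightarrow> (('n::finite,'k::finite) gl \<Rightarrow> ('n::finite,'k::finite) gl) set" where
  "Op X = {L. (\<forall>u\<in>pset X. \<forall>v\<in>pset X. L (u + v) = L u + L v)
             \<and> (\<forall>c. \<forall>u\<in>pset X. L (c *\<^sub>R u) = c *\<^sub>R L u)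
             \<and> bij_betw L (pset X) (pset X)
             \<and> (\<forall>u\<in>pset X. \<forall>v\<in>pset X. ip (L u) (L v) = ip u v)}"

definition Ssol :: "real^'k::finite^'n::finite \<Rightarrow> ('n::finite,'k::finite) gl \<Rightarrow> real \<Rightarrow> ('n::finite,'k::finite) gl \<Rightarrow> ('n::finite,'k::finite) gl" where
  "Ssol X xi t v = Ad (gexp (t *\<^sub>R comp_h X xi))
     (opexp (\<lambda>w. - t *\<^sub>R (ad (comp_h X xi) w + (1/2) *\<^sub>R pr_p X (ad (comp_p X xi) w))) v)"

definition Mrhs :: "real^'k::finite^'n::finite \<Rightarrow> ('n::finite,'k::finite) gl \<Rightarrow> real \<Rightarrow> ('n::finite,'k::finite) gl \<Rightarrow> ('n::finite,'k::finite) gl" where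
  "Mrhs X xi t w = - (1/2) *\<^sub>R pr_p X (ad (Ad (gexp (t *\<^sub>R comp_h X xi)) (comp_p X xi)) w)"

end

theory Submission
  imports Defs
begin

text \<open>Write \<open>\<xi> = \<xi>\<^sub>h + \<xi>\<^sub>p\<close> and \<open>B = ad \<xi>\<^sub>h + \<onehalf> pr\<^sub>p \<circ> ad \<xi>\<^sub>p\<close>. At \<open>X\<close>, \<open>p\<close> consists of the
  skew pairs \<open>(\<Omega>, \<Psi>)\<close> with \<open>X\<^sup>T \<Omega> X = 2 \<Psi>\<close> and \<open>Q \<Omega> Q = 0\<close>, where \<open>Q = I - X X\<^sup>T\<close>; this gives
  \<open>pr\<^sub>p\<close> explicitly and shows that \<open>\<langle>\<cdot>,\<cdot>\<rangle>\<close> is positive definite on \<open>p\<close>. The operator \<open>B\<close> maps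
  \<open>p\<close> into itself and is skew there, so \<open>W(t) = exp(-t B)\<close> is an isometry of \<open>p\<close>. The curve
  \<open>g(t) = exp(t \<xi>\<^sub>h)\<close> stays in the stabilizer \<open>H\<close>, whose adjoint action preserves \<open>h\<close>, \<open>p\<close>,
  \<open>\<langle>\<cdot>,\<cdot>\<rangle>\<close> and the bracket and commutes with \<open>pr\<^sub>p\<close>. Hence \<open>S(t) = Ad\<^sub>g\<^sub>(\<^sub>t\<^sub>) W(t)\<close> satisfies
  \<open>S' = Ad\<^sub>g\<^sub>(\<^sub>t\<^sub>) ([\<xi>\<^sub>h, W] - B W) = -\<onehalf> Ad\<^sub>g\<^sub>(\<^sub>t\<^sub>) pr\<^sub>p [\<xi>\<^sub>p, W] = -\<onehalf> pr\<^sub>p [Ad\<^sub>g\<^sub>(\<^sub>t\<^sub>) \<xi>\<^sub>p, S]\<close>.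
  The difference \<open>D\<close> of two solutions satisfies \<open>D' = M(t) D\<close> with \<open>M(t)\<close> skew on \<open>p\<close>, so
  \<open>\<langle>D, D\<rangle>\<close> is constant, hence zero, and \<open>D = 0\<close> by definiteness.\<close>

section \<open>Bounded linear operators as a Banach algebra\<close>

text \<open>The library type \<open>'a \<Rightarrow>\<^sub>L 'a\<close> carries no multiplication; this copy, with composition as
  product, is a \<open>real_normed_algebra_1\<close> and \<open>banach\<close>, so that the general exponential \<open>exp\<close> and
  its derivative rules apply to operators. \<open>perfect_space\<close> rules out the zero space,
  where \<open>0 = 1\<close>.\<close>

typedef (overloaded) ('a::"{banach,perfect_space}") blinop = "UNIV :: ('a \<Rightarrow>\<^sub>L 'a) set"
  by simp

setup_lifting type_definition_blinop

instantiation blinop :: ("{banach,perfect_space}") real_normed_algebra_1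
begin
lift_definition zero_blinop :: "'a blinop" is 0 .
lift_definition one_blinop :: "'a blinop" is id_blinfun .
lift_definition plus_blinop :: "'a blinop \<Rightarrow> 'a blinop \<Rightarrow> 'a blinop" is "(+)" .
lift_definition minus_blinop :: "'a blinop \<Rightarrow> 'a blinop \<Rightarrow> 'a blinop" is "(-)" .
lift_definition uminus_blinop :: "'a blinop \<Rightarrow> 'a blinop" is "uminus" .
lift_definition times_blinop :: "'a blinop \<Rightarrow> 'a blinop \<Rightarrow> 'a blinop" is "blinfun_compose" .
lift_definition scaleR_blinop :: "real \<Rightarrow> 'a blinop \<Rightarrow> 'a blinop" is "scaleR" .
lift_definition norm_blinop :: "'a blinop \<Rightarrow> real" is norm .
definition dist_blinop :: "'a blinop \<Rightarrow> 'a blinop \<Rightarrow> real" where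
  "dist_blinop a b = norm (a - b)"
definition sgn_blinop :: "'a blinop \<Rightarrow> 'a blinop" where
  "sgn_blinop x = scaleR (inverse (norm x)) x"
definition uniformity_blinop :: "('a blinop \<times> 'a blinop) filter" where
  "uniformity_blinop = (INF e\<in>{0 <..}. principal {(x, y). dist x y < e})"
definition open_blinop :: "'a blinop set \<Rightarrow> bool" where
  "open_blinop S = (\<forall>x\<in>S. \<forall>\<^sub>F (x', y) in uniformity. x' = x \<longrightarrow> y \<in> S)"
instance
proof
  fix a b c :: "'a blinop" and r s :: real and U :: "'a blinop set"
  show "a * b * c = a * (b * c)" by transfer (rule blinfun_eqI, simp)
  show "(a + b) * c = a * c + b * c" by transfer (rule blinfun_eqI, simp add: blinfun.bilinear_simps)
  show "a * (b + c) = a * b + a * c" by transfer (rule blinfun_eqI, simp add: blinfun.bilinear_simps)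
  show "1 * a = a" by transfer (rule blinfun_eqI, simp)
  show "a * 1 = a" by transfer (rule blinfun_eqI, simp)
  show "(0::'a blinop) \<noteq> 1"
    by transfer (metis norm_blinfun_id norm_zero zero_neq_one)
  show "r *\<^sub>R a * b = r *\<^sub>R (a * b)" by transfer (rule blinfun_eqI, simp add: blinfun.bilinear_simps)
  show "a * r *\<^sub>R b = r *\<^sub>R (a * b)" by transfer (rule blinfun_eqI, simp add: blinfun.bilinear_simps)
  show "norm (a * b) \<le> norm a * norm b" by transfer (rule norm_blinfun_compose)
  show "norm (1::'a blinop) = 1" by transfer simp
  show "dist a b = norm (a - b)" by (simp add: dist_blinop_def)
  show "sgn a = inverse (norm a) *\<^sub>R a" by (simp add: sgn_blinop_def)
  show "(uniformity :: ('a blinop \<times> 'a blinop) filter) = (INF e\<in>{0 <..}. principal {(x, y). dist x y < e})"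
    by (simp add: uniformity_blinop_def)
  show "open U = (\<forall>x\<in>U. \<forall>\<^sub>F (x', y) in uniformity. x' = x \<longrightarrow> y \<in> U)"
    by (simp add: open_blinop_def)
  show "a + b + c = a + (b + c)" by transfer (rule add.assoc)
  show "a + b = b + a" by transfer (rule add.commute)
  show "0 + a = a" by transfer simp
  show "- a + a = 0" by transfer simp
  show "a - b = a + - b" by transfer simp
  show "r *\<^sub>R (a + b) = r *\<^sub>R a + r *\<^sub>R b" by transfer (rule scaleR_right_distrib)
  show "(r + s) *\<^sub>R a = r *\<^sub>R a + s *\<^sub>R a" by transfer (rule scaleR_left_distrib)
  show "r *\<^sub>R s *\<^sub>R a = (r * s) *\<^sub>R a" by transfer simp
  show "1 *\<^sub>R a = a" by transfer simp
  show "(norm a = 0) = (a = 0)" by transfer simp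
  show "norm (a + b) \<le> norm a + norm b" by transfer (rule norm_triangle_ineq)
  show "norm (r *\<^sub>R a) = \<bar>r\<bar> * norm a" by transfer simp
qed
end

instance blinop :: ("{banach,perfect_space}") banach
proof
  fix A :: "nat \<Rightarrow> 'a blinop"
  assume "Cauchy A"
  hence "Cauchy (\<lambda>n. Rep_blinop (A n))"
    unfolding Cauchy_def dist_norm by transfer
  then obtain L where "(\<lambda>n. Rep_blinop (A n)) \<longlonglongrightarrow> L"
    by (metis Cauchy_convergent convergent_def)
  hence "A \<longlonglongrightarrow> Abs_blinop L"
    unfolding LIMSEQ_def dist_norm
    by (metis Abs_blinop_inverse UNIV_I minus_blinop.rep_eq norm_blinop.rep_eq)
  thus "convergent A" by (auto simp: convergent_def)
qed

lift_definition blinop_apply :: "'a::{banach,perfect_space} blinop \<Rightarrow> 'a \<Rightarrow> 'a" is blinfun_apply .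

lift_definition blinop_of :: "('a::{banach,perfect_space} \<Rightarrow> 'a) \<Rightarrow> 'a blinop" is Blinfun .

lemma blinop_apply_blinop_of: "bounded_linear f \<Longrightarrow> blinop_apply (blinop_of f) v = f v"
  by transfer (simp add: bounded_linear_Blinfun_apply)

lemma blinop_apply_times: "blinop_apply (A * B) v = blinop_apply A (blinop_apply B v)"
  by transfer simp

lemma blinop_apply_one [simp]: "blinop_apply 1 v = v"
  by transfer simp

lemma blinop_apply_scaleR_left: "blinop_apply (r *\<^sub>R A) v = r *\<^sub>R blinop_apply A v"
  by transfer (simp add: blinfun.scaleR_left)

lemma blinop_apply_uminus_left: "blinop_apply (- A) v = - blinop_apply A v"
  by transfer (simp add: blinfun.minus_left)

lemma bounded_linear_blinop_apply: "bounded_linear (blinop_apply A)"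
  by transfer (rule blinfun.bounded_linear_right)

lemma bounded_linear_blinop_apply_left: "bounded_linear (\<lambda>A. blinop_apply A v)"
proof (rule bounded_linear_intro[where K = "norm v"])
  fix A B :: "'a blinop" and r :: real
  show "blinop_apply (A + B) v = blinop_apply A v + blinop_apply B v"
    by transfer (simp add: blinfun.add_left)
  show "blinop_apply (r *\<^sub>R A) v = r *\<^sub>R blinop_apply A v"
    by (rule blinop_apply_scaleR_left)
  show "norm (blinop_apply A v) \<le> norm A * norm v"
    by transfer (rule norm_blinfun)
qed

lemma blinop_eqI: "(\<And>v. blinop_apply A v = blinop_apply B v) \<Longrightarrow> A = B"
  by transfer (rule blinfun_eqI)

lemma blinop_apply_power: "blinop_apply (A ^ m) v = (blinop_apply A ^^ m) v"
  by (induction m arbitrary: v) (simp_all add: blinop_apply_times)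

lemma exp_blinop_apply_sums:
  "(\<lambda>m. (1 / fact m) *\<^sub>R blinop_apply (A ^ m) v) sums blinop_apply (exp A) v"
proof -
  have "(\<lambda>m. A ^ m /\<^sub>R fact m) sums exp A"
    unfolding exp_def by (rule summable_sums[OF summable_exp_generic])
  from bounded_linear.sums[OF bounded_linear_blinop_apply_left this, of v]
  show ?thesis by (simp add: blinop_apply_scaleR_left divide_inverse)
qed

lemma opexp_eq_exp_blinop:
  assumes "bounded_linear f"
  shows "opexp (\<lambda>w. s *\<^sub>R f w) v = blinop_apply (exp (s *\<^sub>R blinop_of f)) v"
proof -
  have "((\<lambda>w. s *\<^sub>R f w) ^^ m) v = blinop_apply ((s *\<^sub>R blinop_of f) ^ m) v" for m
    by (induction m)
       (simp_all add: blinop_apply_times blinop_apply_scaleR_left blinop_apply_blinop_of[OF assms]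
         linear_scale[OF bounded_linear.linear[OF assms]])
  thus ?thesis
    using exp_blinop_apply_sums[of "s *\<^sub>R blinop_of f" v] by (simp add: opexp_def sums_iff)
qed

lemma has_vector_derivative_exp_blinop_apply_left:
  "((\<lambda>s. blinop_apply (exp (s *\<^sub>R A)) v) has_vector_derivative
     blinop_apply A (blinop_apply (exp (s *\<^sub>R A)) v)) (at s)"
  using bounded_linear.has_vector_derivative[OF bounded_linear_blinop_apply_left[of v]
      exp_scaleR_has_vector_derivative_left]
  by (simp add: blinop_apply_times)

lemma has_vector_derivative_exp_blinop_apply_right:
  "((\<lambda>s. blinop_apply (exp (s *\<^sub>R A)) v) has_vector_derivative
     blinop_apply (exp (s *\<^sub>R A)) (blinop_apply A v)) (at s)"
  using bounded_linear.has_vector_derivative[OF bounded_linear_blinop_apply_left[of v]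
      exp_scaleR_has_vector_derivative_right]
  by (simp add: blinop_apply_times)

lemma exp_blinop_apply_inverse:
  "blinop_apply (exp (s *\<^sub>R A)) (blinop_apply (exp ((- s) *\<^sub>R A)) v) = v"
proof -
  have "exp (s *\<^sub>R A) * exp ((- s) *\<^sub>R A) = exp (s *\<^sub>R A + (- s) *\<^sub>R A)"
    by (rule exp_add_commuting[symmetric]) (simp add: algebra_simps)
  also have "\<dots> = 1" by (simp add: scaleR_left_distrib[symmetric])
  finally show ?thesis by (metis blinop_apply_one blinop_apply_times)
qed

section \<open>Real matrices\<close>

lemma bounded_bilinear_matrix_matrix_mult:
  "bounded_bilinear ((**) :: real^'n^'m \<Rightarrow> real^'p^'n \<Rightarrow> real^'p^'m)"
  unfolding bilinear_conv_bounded_bilinear[symmetric]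
  by (auto simp: bilinear_def linear_iff matrix_matrix_mult_def vec_eq_iff sum.distrib
      algebra_simps sum_distrib_left)

interpretation matrix_mult: bounded_bilinear "(**) :: real^'n^'m \<Rightarrow> real^'p^'n \<Rightarrow> real^'p^'m"
  by (rule bounded_bilinear_matrix_matrix_mult)

lemmas matrix_mult_linear_simps =
  matrix_mult.add_left matrix_mult.add_right matrix_mult.diff_left matrix_mult.diff_right
  matrix_mult.minus_left matrix_mult.minus_right matrix_mult.scaleR_left matrix_mult.scaleR_right

lemma transpose_add: "transpose ((A::real^'n^'m) + B) = transpose A + transpose B"
  by (simp add: transpose_def vec_eq_iff)

lemma transpose_diff: "transpose ((A::real^'n^'m) - B) = transpose A - transpose B"
  by (simp add: transpose_def vec_eq_iff)

lemma bounded_linear_transpose: "bounded_linear (transpose :: real^'n^'m \<Rightarrow> real^'m^'n)"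
  unfolding linear_conv_bounded_linear[symmetric]
  by (rule linearI) (simp_all add: transpose_add transpose_scalar)

lemma trace_scaleR: "trace (r *\<^sub>R (A::real^'n^'n)) = r * trace A"
  by (simp add: trace_def sum_distrib_left)

lemma trace_uminus: "trace (- (A::real^'n^'n)) = - trace A"
  by (simp add: trace_def sum_negf)

lemma trace_zero [simp]: "trace (0::real^'n^'n) = 0"
  by (simp add: trace_def)

lemmas trace_linear_simps = trace_add trace_sub trace_scaleR trace_uminus

lemma trace_mult_cycle: "trace ((A::real^'n^'n) ** B ** C) = trace (B ** C ** A)"
  by (metis matrix_mul_assoc trace_mul_sym)

lemma trace_transpose_mult_self:
  "trace (transpose (A::real^'n^'m) ** A) = (\<Sum>i\<in>UNIV. \<Sum>j\<in>UNIV. (A $ j $ i)\<^sup>2)"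
  by (simp add: trace_def matrix_matrix_mult_def transpose_def power2_eq_square)

lemma trace_transpose_mult_self_nonneg: "0 \<le> trace (transpose (A::real^'n^'m) ** A)"
  by (simp add: trace_transpose_mult_self sum_nonneg)

lemma trace_transpose_mult_self_eq_0_iff:
  "trace (transpose (A::real^'n^'m) ** A) = 0 \<longleftrightarrow> A = 0"
  by (simp add: trace_transpose_mult_self sum_nonneg_eq_0_iff sum_nonneg vec_eq_iff) blast

lemma skew_add: "skew A \<Longrightarrow> skew B \<Longrightarrow> skew (A + B)"
  by (simp add: skew_def transpose_add)

lemma skew_diff: "skew A \<Longrightarrow> skew B \<Longrightarrow> skew (A - B)"
  by (simp add: skew_def transpose_diff)

lemma skew_scaleR: "skew A \<Longrightarrow> skew (r *\<^sub>R A)"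
  by (simp add: skew_def transpose_scalar)

lemma skew_0: "skew 0"
  by (simp add: skew_def transpose_def vec_eq_iff)

lemma skew_commutator: "skew A \<Longrightarrow> skew B \<Longrightarrow> skew (A ** B - B ** A)"
  by (simp add: skew_def transpose_diff matrix_transpose_mul matrix_mult_linear_simps)

lemma skew_transpose_conj: "skew S \<Longrightarrow> skew (transpose M ** S ** M)"
  by (simp add: skew_def matrix_transpose_mul matrix_mul_assoc matrix_mult_linear_simps)

lemma skew_conj_transpose: "skew S \<Longrightarrow> skew (M ** S ** transpose M)"
  using skew_transpose_conj[of S "transpose M"] by simp

lemma skew_eq_0_if_trace_square:
  assumes "skew S" "trace (S ** S) = 0" shows "S = 0"
  using assms trace_transpose_mult_self_eq_0_iff[of S]
  by (simp add: skew_def matrix_mult_linear_simps trace_uminus)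

lemma matrix_inv_orthogonal:
  assumes "orthogonal_matrix (A::real^'n^'n)"
  shows "matrix_inv A = transpose A"
  unfolding matrix_inv_def
proof (rule some_equality)
  show "A ** transpose A = mat 1 \<and> transpose A ** A = mat 1"
    using assms by (simp add: orthogonal_matrix_def)
next
  fix B assume "A ** B = mat 1 \<and> B ** A = mat 1"
  hence "transpose A ** A ** B = transpose A" by (simp add: matrix_mul_assoc[symmetric])
  thus "B = transpose A" using assms by (simp add: orthogonal_matrix)
qed

lemma trace_orthogonal_conj:
  "orthogonal_matrix (E::real^'n^'n) \<Longrightarrow> trace (E ** C ** transpose E) = trace C"
  using trace_mul_sym[of "E ** C" "transpose E"] by (simp add: orthogonal_matrix matrix_mul_assoc)

lemma has_vector_derivative_conj_transpose:
  fixes E A :: "real \<Rightarrow> real^'n^'n"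
  assumes dE: "(E has_vector_derivative E t ** M) (at t)" and "skew M"
    and dA: "(A has_vector_derivative A') (at t)"
  shows "((\<lambda>s. E s ** A s ** transpose (E s)) has_vector_derivative
          E t ** (M ** A t - A t ** M + A') ** transpose (E t)) (at t)"
proof -
  have "((\<lambda>s. E s ** A s ** transpose (E s)) has_vector_derivative
      E t ** A t ** transpose (E t ** M) + (E t ** A' + E t ** M ** A t) ** transpose (E t)) (at t)"
    using matrix_mult.has_vector_derivative[OF matrix_mult.has_vector_derivative[OF dE dA]
        bounded_linear.has_vector_derivative[OF bounded_linear_transpose dE]] .
  moreover have "transpose (E t ** M) = - (M ** transpose (E t))"
    using \<open>skew M\<close> by (simp add: matrix_transpose_mul skew_def matrix_mult_linear_simps)
  ultimately show ?thesis
    by (simp add: matrix_mult_linear_simps matrix_mul_assoc algebra_simps)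
qed

section \<open>The matrix exponential\<close>

definition mat_lmult :: "real^'n::finite^'n \<Rightarrow> (real^'n^'n) blinop" where
  "mat_lmult M = blinop_of (\<lambda>Y. M ** Y)"

lemma blinop_apply_mat_lmult: "blinop_apply (mat_lmult M) Y = M ** Y"
  unfolding mat_lmult_def by (rule blinop_apply_blinop_of[OF matrix_mult.bounded_linear_right])

lemma mat_lmult_scaleR: "mat_lmult (t *\<^sub>R M) = t *\<^sub>R mat_lmult M"
  by (rule blinop_eqI) (simp add: blinop_apply_mat_lmult blinop_apply_scaleR_left matrix_mult.scaleR_left)

lemma blinop_apply_power_mat_lmult: "blinop_apply (mat_lmult M ^ m) Y = mpow M m ** Y"
  by (induction m arbitrary: Y)
     (simp_all add: blinop_apply_times blinop_apply_mat_lmult matrix_mul_assoc)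

lemma mexp_sums: "(\<lambda>m. (1 / fact m) *\<^sub>R mpow M m) sums mexp M"
proof -
  have "(\<lambda>m. (1 / fact m) *\<^sub>R mpow M m) sums blinop_apply (exp (mat_lmult M)) (mat 1)"
    using exp_blinop_apply_sums[of "mat_lmult M" "mat 1"] by (simp add: blinop_apply_power_mat_lmult)
  thus ?thesis unfolding mexp_def by (simp add: sums_iff)
qed

lemma mexp_eq_exp_mat_lmult: "mexp M ** Y = blinop_apply (exp (mat_lmult M)) Y"
proof (rule sums_unique2)
  show "(\<lambda>m. (1 / fact m) *\<^sub>R (mpow M m ** Y)) sums (mexp M ** Y)"
    using bounded_linear.sums[OF matrix_mult.bounded_linear_left mexp_sums]
    by (simp add: matrix_mult.scaleR_left)
  show "(\<lambda>m. (1 / fact m) *\<^sub>R (mpow M m ** Y)) sums blinop_apply (exp (mat_lmult M)) Y"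
    using exp_blinop_apply_sums[of "mat_lmult M" Y] by (simp add: blinop_apply_power_mat_lmult)
qed

lemma mexp_zero: "mexp (0::real^'n^'n) = mat 1"
  using mexp_eq_exp_mat_lmult[of 0 "mat 1"] by (simp add: mat_lmult_scaleR[of 0, simplified])

lemma mexp_minus_mult: "mexp (- M) ** mexp M = mat 1"
proof -
  have "mexp (- M) ** mexp M
      = blinop_apply (exp ((- 1) *\<^sub>R mat_lmult M)) (blinop_apply (exp (1 *\<^sub>R mat_lmult M)) (mat 1))"
    by (metis mat_lmult_scaleR matrix_mul_rid mexp_eq_exp_mat_lmult scaleR_minus1_left scaleR_one)
  thus ?thesis using exp_blinop_apply_inverse[of "- 1"] by simp
qed

lemma mpow_transpose: "transpose (mpow M m) = mpow (transpose M) m"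
proof -
  have comm: "mpow A m ** A = A ** mpow A m" for A :: "real^'n^'n" and m
    by (induction m) (simp_all add: matrix_mul_assoc[symmetric])
  show ?thesis by (induction m) (simp_all add: matrix_transpose_mul comm)
qed

lemma mexp_transpose: "transpose (mexp M) = mexp (transpose M)"
proof (rule sums_unique2)
  show "(\<lambda>m. (1 / fact m) *\<^sub>R mpow (transpose M) m) sums transpose (mexp M)"
    using bounded_linear.sums[OF bounded_linear_transpose mexp_sums]
    by (simp add: transpose_scalar mpow_transpose)
qed (rule mexp_sums)

lemma orthogonal_matrix_mexp: "skew M \<Longrightarrow> orthogonal_matrix (mexp M)"
  by (simp add: orthogonal_matrix mexp_transpose skew_def mexp_minus_mult)

lemma mexp_intertwine:
  assumes "A ** X = X ** B"
  shows "mexp A ** X = X ** mexp B"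
proof (rule sums_unique2)
  have pow: "mpow A m ** X = X ** mpow B m" for m
    by (induction m) (simp_all add: assms matrix_mul_assoc flip: matrix_mul_assoc[of A])
  have "(\<lambda>m. (1 / fact m) *\<^sub>R (mpow A m ** X)) sums (mexp A ** X)"
    using bounded_linear.sums[OF matrix_mult.bounded_linear_left mexp_sums]
    by (simp add: matrix_mult.scaleR_left)
  thus "(\<lambda>m. (1 / fact m) *\<^sub>R (X ** mpow B m)) sums (mexp A ** X)"
    by (simp only: pow)
  show "(\<lambda>m. (1 / fact m) *\<^sub>R (X ** mpow B m)) sums (X ** mexp B)"
    using bounded_linear.sums[OF matrix_mult.bounded_linear_right mexp_sums]
    by (simp add: matrix_mult.scaleR_right)
qed

lemma has_vector_derivative_mexp:
  "((\<lambda>t. mexp (t *\<^sub>R M)) has_vector_derivative mexp (t *\<^sub>R M) ** M) (at t)"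
proof -
  have "blinop_apply (exp (s *\<^sub>R mat_lmult M)) Y = mexp (s *\<^sub>R M) ** Y" for s Y
    by (simp add: mexp_eq_exp_mat_lmult mat_lmult_scaleR)
  thus ?thesis
    using has_vector_derivative_exp_blinop_apply_right[of "mat_lmult M" "mat 1" t]
    by (simp add: blinop_apply_mat_lmult)
qed

section \<open>The Lie algebra of O(n) x O(k)\<close>

lemma gset_iff: "z \<in> gset \<longleftrightarrow> skew (fst z) \<and> skew (snd z)"
  by (cases z) (simp add: gset_def)

lemma gset_add: "a \<in> gset \<Longrightarrow> b \<in> gset \<Longrightarrow> a + b \<in> gset"
  by (simp add: gset_iff skew_add)

lemma gset_diff: "a \<in> gset \<Longrightarrow> b \<in> gset \<Longrightarrow> a - b \<in> gset"
  by (simp add: gset_iff skew_diff)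

lemma gset_scaleR: "a \<in> gset \<Longrightarrow> r *\<^sub>R a \<in> gset"
  by (simp add: gset_iff skew_scaleR)

lemma gset_0: "0 \<in> gset"
  by (simp add: gset_iff skew_0)

lemma ad_in_gset: "a \<in> gset \<Longrightarrow> b \<in> gset \<Longrightarrow> ad a b \<in> gset"
  by (simp add: gset_iff ad_def skew_commutator)

lemma bounded_bilinear_ip: "bounded_bilinear ip"
  unfolding bilinear_conv_bounded_bilinear[symmetric]
  by (auto simp: bilinear_def linear_iff ip_def matrix_mult_linear_simps trace_linear_simps
      algebra_simps)

interpretation ip: bounded_bilinear ip
  by (rule bounded_bilinear_ip)

lemma ip_commute: "ip a b = ip b a"
  by (simp add: ip_def trace_mul_sym[of "fst a"] trace_mul_sym[of "snd a"])

lemma bounded_bilinear_ad: "bounded_bilinear ad"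
  unfolding bilinear_conv_bounded_bilinear[symmetric]
  by (auto simp: bilinear_def linear_iff ad_def matrix_mult_linear_simps algebra_simps)

interpretation ad: bounded_bilinear ad
  by (rule bounded_bilinear_ad)

lemma ip_ad_left: "ip (ad a b) c = - ip b (ad a c)"
  by (simp add: ip_def ad_def matrix_mult_linear_simps trace_linear_simps matrix_mul_assoc
      trace_mult_cycle[of "fst a" "fst b"] trace_mult_cycle[of "snd a" "snd b"])

section \<open>The decomposition g = h + p at a point of the Stiefel manifold\<close>

lemma hset_iff: "z \<in> hset X \<longleftrightarrow> skew (fst z) \<and> skew (snd z) \<and> fst z ** X = X ** snd z"
  by (cases z) (simp add: hset_def gset_def)

lemma hset_diff: "a \<in> hset X \<Longrightarrow> b \<in> hset X \<Longrightarrow> a - b \<in> hset X"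
  by (simp add: hset_iff skew_diff matrix_mult_linear_simps)

lemma hset_scaleR: "a \<in> hset X \<Longrightarrow> r *\<^sub>R a \<in> hset X"
  by (simp add: hset_iff skew_scaleR matrix_mult_linear_simps)

lemma hset_subset_gset: "z \<in> hset X \<Longrightarrow> z \<in> gset"
  by (simp add: hset_iff gset_iff)

lemma pset_subset_gset: "z \<in> pset X \<Longrightarrow> z \<in> gset"
  by (simp add: pset_def)

lemma ip_pset_hset: "a \<in> pset X \<Longrightarrow> h \<in> hset X \<Longrightarrow> ip a h = 0"
  by (simp add: pset_def)

lemma pset_add: "a \<in> pset X \<Longrightarrow> b \<in> pset X \<Longrightarrow> a + b \<in> pset X"
  by (simp add: pset_def gset_add ip.add_left)

lemma pset_diff: "a \<in> pset X \<Longrightarrow> b \<in> pset X \<Longrightarrow> a - b \<in> pset X"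
  by (simp add: pset_def gset_diff ip.diff_left)

lemma pset_scaleR: "a \<in> pset X \<Longrightarrow> r *\<^sub>R a \<in> pset X"
  by (simp add: pset_def gset_scaleR ip.scaleR_left)

lemma subspace_pset: "subspace (pset X)"
proof -
  have "0 \<in> pset X" by (simp add: pset_def gset_0 ip.zero_left)
  thus ?thesis using pset_add pset_scaleR by (auto simp: subspace_def)
qed

lemma ad_hset_hset:
  assumes "a \<in> hset X" "b \<in> hset X" shows "ad a b \<in> hset X"
proof -
  have "fst a ** fst b ** X = X ** (snd a ** snd b)" "fst b ** fst a ** X = X ** (snd b ** snd a)"
    using assms by (simp_all add: hset_iff matrix_mul_assoc flip: matrix_mul_assoc[of _ _ X])
  thus ?thesis using assms by (simp add: hset_iff ad_def skew_commutator matrix_mult_linear_simps)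
qed

lemma ad_hset_pset: "h \<in> hset X \<Longrightarrow> w \<in> pset X \<Longrightarrow> ad h w \<in> pset X"
  using ip_ad_left[of h w] ad_hset_hset[of h X]
  by (simp add: pset_def ad_in_gset hset_subset_gset)

definition perp_proj :: "real^'k::finite^'n::finite \<Rightarrow> real^'n^'n" where
  "perp_proj X = mat 1 - X ** transpose X"

text \<open>With \<open>S = 2 \<Psi> - X\<^sup>T \<Omega> X\<close> and \<open>Q = perp_proj X\<close>, the \<open>h\<close>-component of \<open>(\<Omega>, \<Psi>)\<close> is
  \<open>(X S X\<^sup>T + Q \<Omega> Q, S)\<close>. Unlike \<open>pr_p\<close>, this formula is linear on all pairs of matrices.\<close>

definition pr_p_formula :: "real^'k::finite^'n::finite \<Rightarrow> ('n,'k) gl \<Rightarrow> ('n,'k) gl" where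
  "pr_p_formula X z =
     (fst z - X ** (2 *\<^sub>R snd z - transpose X ** fst z ** X) ** transpose X
        - perp_proj X ** fst z ** perp_proj X,
      transpose X ** fst z ** X - snd z)"

lemma linear_pr_p_formula: "linear (pr_p_formula X)"
  by (rule linearI) (simp_all add: pr_p_formula_def matrix_mult_linear_simps algebra_simps)

lemma ip_conj_hset_elem:
  "ip z (X ** S ** transpose X, S) = trace ((2 *\<^sub>R snd z - transpose X ** fst z ** X) ** S)"
  using trace_mul_sym[of "fst z ** X ** S" "transpose X"]
  by (simp add: ip_def matrix_mult_linear_simps trace_linear_simps matrix_mul_assoc)

lemma ip_perp_conj_hset_elem:
  "ip z (perp_proj X ** D ** perp_proj X, 0) = - trace (perp_proj X ** fst z ** perp_proj X ** D)"
  using trace_mul_sym[of "fst z ** perp_proj X ** D" "perp_proj X"]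
  by (simp add: ip_def matrix_mul_assoc)

locale stiefel_point =
  fixes X :: "real^'k::finite^'n::finite"
  assumes orthonormal: "transpose X ** X = mat 1"
begin

lemma mult_orthonormal [simp]: "transpose X ** X = mat 1" "A ** transpose X ** X = A"
  by (simp_all add: orthonormal flip: matrix_mul_assoc)

lemma perp_proj_mult_X [simp]: "perp_proj X ** X = 0" "A ** perp_proj X ** X = 0"
  by (simp_all add: perp_proj_def matrix_mult_linear_simps orthonormal flip: matrix_mul_assoc)

lemma transpose_X_mult_perp_proj [simp]:
  "transpose X ** perp_proj X = 0" "A ** transpose X ** perp_proj X = 0"
  by (simp_all add: perp_proj_def matrix_mult_linear_simps matrix_mul_assoc orthonormal)

lemma perp_proj_idem [simp]:
  "perp_proj X ** perp_proj X = perp_proj X" "A ** perp_proj X ** perp_proj X = A ** perp_proj X"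
proof -
  show idem: "perp_proj X ** perp_proj X = perp_proj X"
    by (simp add: perp_proj_def matrix_mult_linear_simps matrix_mul_assoc)
  show "A ** perp_proj X ** perp_proj X = A ** perp_proj X"
    by (simp add: idem flip: matrix_mul_assoc)
qed

lemma transpose_perp_proj [simp]: "transpose (perp_proj X) = perp_proj X"
  by (simp add: perp_proj_def transpose_diff matrix_transpose_mul)

lemma hset_decomp:
  assumes "h \<in> hset X"
  shows "h = (X ** snd h ** transpose X, snd h) + (perp_proj X ** fst h ** perp_proj X, 0)"
proof -
  have h: "fst h ** X = X ** snd h" and "skew (fst h)" "skew (snd h)"
    using assms by (auto simp: hset_iff)
  moreover have "transpose X ** transpose (fst h) = transpose (snd h) ** transpose X"
    by (metis h matrix_transpose_mul)
  ultimately have "transpose X ** fst h = snd h ** transpose X"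
    by (simp add: skew_def matrix_mult_linear_simps)
  hence hT: "A ** transpose X ** fst h = A ** snd h ** transpose X" for A
    by (simp flip: matrix_mul_assoc)
  show ?thesis
    by (simp add: prod_eq_iff perp_proj_def matrix_mult_linear_simps matrix_mul_assoc hT h)
qed

lemma conj_in_hset: "skew S \<Longrightarrow> (X ** S ** transpose X, S) \<in> hset X"
  by (simp add: hset_iff skew_conj_transpose)

lemma perp_conj_in_hset: "skew D \<Longrightarrow> (perp_proj X ** D ** perp_proj X, 0) \<in> hset X"
  using skew_conj_transpose[of D "perp_proj X"] by (simp add: hset_iff skew_0)

lemma pset_iff:
  "z \<in> pset X \<longleftrightarrow>
     z \<in> gset \<and> transpose X ** fst z ** X = 2 *\<^sub>R snd z \<and> perp_proj X ** fst z ** perp_proj X = 0"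
proof
  assume z: "z \<in> pset X"
  hence skew: "skew (fst z)" "skew (snd z)" by (simp_all add: pset_def gset_iff)
  define S where "S = 2 *\<^sub>R snd z - transpose X ** fst z ** X"
  have "skew S"
    unfolding S_def using skew by (simp add: skew_diff skew_scaleR skew_transpose_conj)
  hence "trace (S ** S) = 0"
    using ip_pset_hset[OF z conj_in_hset] ip_conj_hset_elem[of z X S] by (simp add: S_def)
  hence S0: "S = 0" by (rule skew_eq_0_if_trace_square[OF \<open>skew S\<close>])
  define D where "D = perp_proj X ** fst z ** perp_proj X"
  have "skew D" unfolding D_def using skew_conj_transpose[of "fst z" "perp_proj X"] skew by simp
  hence "ip z (perp_proj X ** D ** perp_proj X, 0) = 0"
    by (rule ip_pset_hset[OF z perp_conj_in_hset])
  hence "trace (D ** D) = 0"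
    using ip_perp_conj_hset_elem[of z X D] by (simp add: D_def[symmetric])
  hence "D = 0" by (rule skew_eq_0_if_trace_square[OF \<open>skew D\<close>])
  with S0 z show "z \<in> gset \<and> transpose X ** fst z ** X = 2 *\<^sub>R snd z
      \<and> perp_proj X ** fst z ** perp_proj X = 0"
    by (simp add: S_def D_def pset_subset_gset)
next
  assume z: "z \<in> gset \<and> transpose X ** fst z ** X = 2 *\<^sub>R snd z
      \<and> perp_proj X ** fst z ** perp_proj X = 0"
  have "ip z h = 0" if "h \<in> hset X" for h
  proof -
    have "ip z h = ip z ((X ** snd h ** transpose X, snd h) + (perp_proj X ** fst h ** perp_proj X, 0))"
      using hset_decomp[OF that] by (rule arg_cong)
    thus ?thesis
      using z by (simp only: ip.add_right ip_conj_hset_elem ip_perp_conj_hset_elem) simp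
  qed
  with z show "z \<in> pset X" by (simp add: pset_def)
qed

lemma trace_square_pset:
  assumes "z \<in> pset X"
  shows "trace (fst z ** fst z) = 4 * trace (snd z ** snd z)
           - 2 * trace (transpose (perp_proj X ** fst z ** X) ** (perp_proj X ** fst z ** X))"
proof -
  obtain \<Omega> \<Psi> where z: "z = (\<Omega>, \<Psi>)" by (cases z)
  have c1: "transpose X ** \<Omega> ** X = 2 *\<^sub>R \<Psi>" and c2: "perp_proj X ** \<Omega> ** perp_proj X = 0"
    and "skew \<Omega>"
    using assms by (simp_all add: z pset_iff gset_iff)
  define T where "T = trace (transpose X ** \<Omega> ** perp_proj X ** \<Omega> ** X)"
  have split: "A ** \<Omega> ** B = A ** X ** transpose X ** \<Omega> ** B + A ** perp_proj X ** \<Omega> ** B"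
    for A B
    by (simp add: perp_proj_def matrix_mult_linear_simps matrix_mul_assoc)
  have "trace (\<Omega> ** X ** transpose X ** \<Omega>) = trace (transpose X ** \<Omega> ** \<Omega> ** X)"
    using trace_mul_sym[of "\<Omega> ** X" "transpose X ** \<Omega>"] by (simp add: matrix_mul_assoc)
  also have "\<dots> = trace ((transpose X ** \<Omega> ** X) ** (transpose X ** \<Omega> ** X)) + T"
    using split[of "transpose X ** \<Omega>" "X"]
    by (simp add: T_def trace_add matrix_mul_assoc)
  finally have tX: "trace (\<Omega> ** X ** transpose X ** \<Omega>) = 4 * trace (\<Psi> ** \<Psi>) + T"
    by (simp add: c1 matrix_mult_linear_simps trace_scaleR)
  have "trace (\<Omega> ** perp_proj X ** \<Omega>)
      = trace (X ** transpose X ** \<Omega> ** perp_proj X ** \<Omega>)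
        + trace (perp_proj X ** \<Omega> ** perp_proj X ** \<Omega>)"
    using split[of "mat 1" "perp_proj X ** \<Omega>"] by (simp add: trace_add matrix_mul_assoc)
  also have "\<dots> = T"
    using trace_mul_sym[of X "transpose X ** \<Omega> ** perp_proj X ** \<Omega>"]
    by (simp add: T_def c2 matrix_mul_assoc)
  finally have tQ: "trace (\<Omega> ** perp_proj X ** \<Omega>) = T" .
  have "transpose (perp_proj X ** \<Omega> ** X) = - (transpose X ** \<Omega> ** perp_proj X)"
    using \<open>skew \<Omega>\<close>
    by (simp add: skew_def matrix_transpose_mul matrix_mult_linear_simps matrix_mul_assoc)
  hence tC: "trace (transpose (perp_proj X ** \<Omega> ** X) ** (perp_proj X ** \<Omega> ** X)) = - T"
    by (simp add: T_def matrix_mult_linear_simps matrix_mul_assoc trace_uminus)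
  show ?thesis
    using split[of \<Omega> "mat 1"] tX tQ tC by (simp add: z trace_add)
qed

lemma ip_self_pset:
  assumes "z \<in> pset X"
  shows "ip z z = 2 * trace (transpose (snd z) ** snd z)
                 + 2 * trace (transpose (perp_proj X ** fst z ** X) ** (perp_proj X ** fst z ** X))"
proof -
  have "skew (snd z)" using assms by (simp add: pset_def gset_iff)
  thus ?thesis
    using trace_square_pset[OF assms]
    by (simp add: ip_def skew_def matrix_mult_linear_simps trace_uminus)
qed

lemma pset_ip_self_eq_0:
  assumes "z \<in> pset X" "ip z z = 0"
  shows "z = 0"
proof -
  have "trace (transpose (snd z) ** snd z) = 0"
    and C: "trace (transpose (perp_proj X ** fst z ** X) ** (perp_proj X ** fst z ** X)) = 0"
    using ip_self_pset[OF assms(1)] assms(2) trace_transpose_mult_self_nonneg[of "snd z"]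
      trace_transpose_mult_self_nonneg[of "perp_proj X ** fst z ** X"]
    by linarith+
  hence "snd z = 0" by (simp add: trace_transpose_mult_self_eq_0_iff)
  hence "trace (fst z ** fst z) = 0" using trace_square_pset[OF assms(1)] C by simp
  moreover have "skew (fst z)" using assms(1) by (simp add: pset_def gset_iff)
  ultimately have "fst z = 0" using skew_eq_0_if_trace_square by blast
  with \<open>snd z = 0\<close> show ?thesis by (simp add: prod_eq_iff)
qed

lemma pset_hset_eq_0: "z \<in> pset X \<Longrightarrow> z \<in> hset X \<Longrightarrow> z = 0"
  using pset_ip_self_eq_0 ip_pset_hset by blast

lemma pr_p_formula_in_pset:
  assumes "z \<in> gset" shows "pr_p_formula X z \<in> pset X"
proof -
  have "skew (fst z)" "skew (snd z)" using assms by (simp_all add: gset_iff)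
  hence "pr_p_formula X z \<in> gset"
    using skew_transpose_conj[of "fst z" X] skew_conj_transpose[of _ X]
      skew_conj_transpose[of "fst z" "perp_proj X"]
    by (simp add: gset_iff pr_p_formula_def skew_diff skew_scaleR)
  thus ?thesis
    by (simp add: pset_iff pr_p_formula_def matrix_mult_linear_simps matrix_mul_assoc
        scaleR_right_diff_distrib) (simp add: vec_eq_iff)
qed

lemma diff_pr_p_formula_in_hset:
  assumes "z \<in> gset" shows "z - pr_p_formula X z \<in> hset X"
proof -
  define S where "S = 2 *\<^sub>R snd z - transpose X ** fst z ** X"
  have "skew (fst z)" "skew (snd z)" using assms by (simp_all add: gset_iff)
  hence "skew S"
    unfolding S_def by (simp add: skew_diff skew_scaleR skew_transpose_conj)
  have "z - pr_p_formula X z = (X ** S ** transpose X, S) + (perp_proj X ** fst z ** perp_proj X, 0)"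
    by (simp add: pr_p_formula_def S_def prod_eq_iff) (simp add: vec_eq_iff)
  thus ?thesis
    using conj_in_hset[OF \<open>skew S\<close>] perp_conj_in_hset[OF \<open>skew (fst z)\<close>]
    by (simp add: hset_iff skew_add matrix_mult_linear_simps)
qed

lemma pr_p_formula_unique:
  assumes "z \<in> gset" "q \<in> pset X" "z - q \<in> hset X"
  shows "q = pr_p_formula X z"
proof -
  have "q - pr_p_formula X z \<in> pset X"
    using assms(1,2) by (simp add: pset_diff pr_p_formula_in_pset)
  moreover have "q - pr_p_formula X z = (z - pr_p_formula X z) - (z - q)" by simp
  hence "q - pr_p_formula X z \<in> hset X"
    using hset_diff[OF diff_pr_p_formula_in_hset[OF assms(1)] assms(3)] by simp
  ultimately show ?thesis using pset_hset_eq_0 by fastforce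
qed

lemma pr_p_eq_pr_p_formula: "z \<in> gset \<Longrightarrow> pr_p X z = pr_p_formula X z"
  unfolding pr_p_def
  by (rule the_equality) (auto simp: pr_p_formula_in_pset diff_pr_p_formula_in_hset pr_p_formula_unique)

lemma ip_pr_p_formula:
  assumes "z \<in> gset" "v \<in> pset X"
  shows "ip (pr_p_formula X z) v = ip z v"
  using ip_pset_hset[OF assms(2) diff_pr_p_formula_in_hset[OF assms(1)]]
  by (simp add: ip_commute[of v] ip.diff_left)

end
section \<open>The stabilizer H and its adjoint action\<close>

definition stabilizer :: "real^'k::finite^'n::finite \<Rightarrow> ((real^'n^'n) \<times> (real^'k^'k)) set" where
  "stabilizer X =
     {g. orthogonal_matrix (fst g) \<and> orthogonal_matrix (snd g) \<and> fst g ** X = X ** snd g}"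

text \<open>\<open>Ad\<close> with \<open>matrix_inv\<close> replaced by the transpose: the two agree on orthogonal pairs, and this
  version is linear with no side conditions.\<close>

definition Ad_orth :: "(real^'n::finite^'n) \<times> (real^'k::finite^'k) \<Rightarrow> ('n,'k) gl \<Rightarrow> ('n,'k) gl" where
  "Ad_orth g b = (fst g ** fst b ** transpose (fst g), snd g ** snd b ** transpose (snd g))"

lemma Ad_eq_Ad_orth:
  "orthogonal_matrix (fst g) \<Longrightarrow> orthogonal_matrix (snd g) \<Longrightarrow> Ad g = Ad_orth g"
  by (simp add: fun_eq_iff Ad_def Ad_orth_def matrix_inv_orthogonal)

lemma linear_Ad_orth: "linear (Ad_orth g)"
  by (rule linearI) (simp_all add: Ad_orth_def matrix_mult_linear_simps)

lemma Ad_orth_one: "Ad_orth (mat 1, mat 1) b = b"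
  by (simp add: Ad_orth_def)

lemma Ad_orth_in_gset: "a \<in> gset \<Longrightarrow> Ad_orth g a \<in> gset"
  by (simp add: Ad_orth_def gset_iff skew_conj_transpose)

context
  fixes g :: "(real^'n::finite^'n) \<times> (real^'k::finite^'k)"
  assumes orth: "orthogonal_matrix (fst g)" "orthogonal_matrix (snd g)"
begin

lemma orthogonal_cancel:
  "transpose (fst g) ** fst g = mat 1" "fst g ** transpose (fst g) = mat 1"
  "transpose (snd g) ** snd g = mat 1" "snd g ** transpose (snd g) = mat 1"
  "A ** transpose (fst g) ** fst g = A" "A ** fst g ** transpose (fst g) = A"
  "B ** transpose (snd g) ** snd g = B" "B ** snd g ** transpose (snd g) = B"
  using orth by (simp_all add: orthogonal_matrix_def flip: matrix_mul_assoc)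

lemma ip_Ad_orth: "ip (Ad_orth g a) (Ad_orth g b) = ip a b"
proof -
  have "fst g ** A ** transpose (fst g) ** (fst g ** B ** transpose (fst g))
      = fst g ** (A ** B) ** transpose (fst g)"
    "snd g ** C ** transpose (snd g) ** (snd g ** D ** transpose (snd g))
      = snd g ** (C ** D) ** transpose (snd g)" for A B C D
    by (simp_all add: matrix_mul_assoc orthogonal_cancel)
  thus ?thesis
    by (simp add: ip_def Ad_orth_def trace_orthogonal_conj orth)
qed

lemma Ad_orth_ad: "Ad_orth g (ad a b) = ad (Ad_orth g a) (Ad_orth g b)"
  by (simp add: Ad_orth_def ad_def matrix_mult_linear_simps matrix_mul_assoc orthogonal_cancel)

lemma Ad_orth_transpose_inverse:
  "Ad_orth g (Ad_orth (map_prod transpose transpose g) b) = b"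
  "Ad_orth (map_prod transpose transpose g) (Ad_orth g b) = b"
  by (simp_all add: Ad_orth_def matrix_mul_assoc orthogonal_cancel)

end

lemma stabilizer_orthogonal:
  "g \<in> stabilizer X \<Longrightarrow> orthogonal_matrix (fst g)"
  "g \<in> stabilizer X \<Longrightarrow> orthogonal_matrix (snd g)"
  by (simp_all add: stabilizer_def)

lemma stabilizer_transpose:
  assumes "g \<in> stabilizer X" shows "map_prod transpose transpose g \<in> stabilizer X"
proof -
  note cancel = orthogonal_cancel[OF stabilizer_orthogonal[OF assms]]
  have "fst g ** X = X ** snd g" using assms by (simp add: stabilizer_def)
  hence "transpose (fst g) ** X = transpose (fst g) ** (fst g ** X) ** transpose (snd g)"
    by (simp add: matrix_mul_assoc cancel)
  also have "\<dots> = X ** transpose (snd g)"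
    by (simp add: matrix_mul_assoc cancel)
  finally show ?thesis
    using assms by (simp add: stabilizer_def orthogonal_matrix_def)
qed

lemma Ad_orth_in_hset:
  assumes "g \<in> stabilizer X" "h \<in> hset X" shows "Ad_orth g h \<in> hset X"
proof -
  have "fst g ** X = X ** snd g" "transpose (fst g) ** X = X ** transpose (snd g)"
    using assms(1) stabilizer_transpose[OF assms(1)] by (simp_all add: stabilizer_def)
  hence "fst g ** fst h ** transpose (fst g) ** X = X ** (snd g ** snd h ** transpose (snd g))"
    using assms(2) by (simp add: hset_iff flip: matrix_mul_assoc) (simp add: matrix_mul_assoc)
  thus ?thesis
    using assms(2) by (simp add: hset_iff Ad_orth_def skew_conj_transpose)
qed

lemma Ad_orth_in_pset:
  assumes "g \<in> stabilizer X" "q \<in> pset X" shows "Ad_orth g q \<in> pset X"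
proof -
  let ?g' = "map_prod transpose transpose g"
  note orth = stabilizer_orthogonal[OF assms(1)]
  have "ip (Ad_orth g q) h = 0" if "h \<in> hset X" for h
  proof -
    have "ip (Ad_orth g q) h = ip (Ad_orth g q) (Ad_orth g (Ad_orth ?g' h))"
      by (simp add: Ad_orth_transpose_inverse[OF orth])
    also have "\<dots> = ip q (Ad_orth ?g' h)"
      by (rule ip_Ad_orth[OF orth])
    also have "\<dots> = 0"
      using ip_pset_hset[OF assms(2) Ad_orth_in_hset[OF stabilizer_transpose[OF assms(1)] that]] .
    finally show ?thesis .
  qed
  thus ?thesis using assms(2) by (simp add: pset_def Ad_orth_in_gset)
qed

lemma bij_betw_Ad_orth:
  assumes "g \<in> stabilizer X" shows "bij_betw (Ad_orth g) (pset X) (pset X)"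
proof (rule bij_betw_byWitness[where f' = "Ad_orth (map_prod transpose transpose g)"])
  note inverse = Ad_orth_transpose_inverse[OF stabilizer_orthogonal[OF assms]]
  show "\<forall>a\<in>pset X. Ad_orth (map_prod transpose transpose g) (Ad_orth g a) = a"
    "\<forall>a\<in>pset X. Ad_orth g (Ad_orth (map_prod transpose transpose g) a) = a"
    by (simp_all add: inverse)
  show "Ad_orth g ` pset X \<subseteq> pset X"
    "Ad_orth (map_prod transpose transpose g) ` pset X \<subseteq> pset X"
    using Ad_orth_in_pset assms stabilizer_transpose[OF assms] by blast+
qed

lemma gexp_in_stabilizer:
  assumes "h \<in> hset X" shows "gexp h \<in> stabilizer X"
  using assms
  by (simp add: hset_iff stabilizer_def gexp_def orthogonal_matrix_mexp mexp_intertwine)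

lemma (in stiefel_point) pr_p_formula_Ad_orth:
  assumes "g \<in> stabilizer X" "z \<in> gset"
  shows "pr_p_formula X (Ad_orth g z) = Ad_orth g (pr_p_formula X z)"
proof -
  have "Ad_orth g z - Ad_orth g (pr_p_formula X z) = Ad_orth g (z - pr_p_formula X z)"
    by (simp add: linear_diff[OF linear_Ad_orth])
  hence "Ad_orth g z - Ad_orth g (pr_p_formula X z) \<in> hset X"
    using Ad_orth_in_hset[OF assms(1) diff_pr_p_formula_in_hset[OF assms(2)]] by simp
  thus ?thesis
    using pr_p_formula_unique[OF Ad_orth_in_gset[OF assms(2)]
        Ad_orth_in_pset[OF assms(1) pr_p_formula_in_pset[OF assms(2)]]]
    by simp
qed

section \<open>The solution of the ODE\<close>

lemma bounded_bilinear_constant_if_derivatives_cancel: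
  assumes "bounded_bilinear B"
    and f: "\<And>s. (f has_vector_derivative f' s) (at s)"
    and g: "\<And>s. (g has_vector_derivative g' s) (at s)"
    and cancel: "\<And>s. B (f s) (g' s) + B (f' s) (g s) = 0"
  shows "B (f t) (g t) = B (f 0) (g 0)"
proof -
  have "((\<lambda>s. B (f s) (g s)) has_derivative (\<lambda>h. 0)) (at s)" for s
    using bounded_bilinear.has_vector_derivative[OF assms(1) f g, of s] cancel[of s]
    by (simp add: has_vector_derivative_def)
  then obtain c where "\<forall>s\<in>UNIV. B (f s) (g s) = c"
    using has_derivative_zero_constant[of UNIV "\<lambda>s. B (f s) (g s)"] by auto
  thus ?thesis by simp
qed

lemma funpow_eq_on_invariant:
  assumes "\<And>w. w \<in> S \<Longrightarrow> f w = g w" "\<And>w. w \<in> S \<Longrightarrow> g w \<in> S" "v \<in> S"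
  shows "(f ^^ m) v = (g ^^ m) v"
proof -
  have "(f ^^ m) v = (g ^^ m) v \<and> (g ^^ m) v \<in> S"
    by (induction m) (simp_all add: assms)
  thus ?thesis ..
qed

locale stiefel_ode = stiefel_point X for X :: "real^'k::finite^'n::finite" +
  fixes xi :: "('n,'k) gl"
  assumes xi_in_gset: "xi \<in> gset"
begin

lemma comp_h_in_hset: "comp_h X xi \<in> hset X"
  using diff_pr_p_formula_in_hset[OF xi_in_gset]
  by (simp add: comp_h_def pr_p_eq_pr_p_formula[OF xi_in_gset])

lemma comp_p_in_pset: "comp_p X xi \<in> pset X"
  using pr_p_formula_in_pset[OF xi_in_gset]
  by (simp add: comp_p_def pr_p_eq_pr_p_formula[OF xi_in_gset])

text \<open>The generator \<open>ad \<xi>\<^sub>h + \<onehalf> pr\<^sub>p \<circ> ad \<xi>\<^sub>p\<close>, with \<open>pr_p\<close> replaced by its linear extension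
  \<open>pr_p_formula\<close>, so that it is a bounded operator on all pairs of matrices and has an
  exponential.\<close>

definition B_op :: "('n,'k) gl \<Rightarrow> ('n,'k) gl" where
  "B_op w = ad (comp_h X xi) w + (1/2) *\<^sub>R pr_p_formula X (ad (comp_p X xi) w)"

lemma bounded_linear_B_op: "bounded_linear B_op"
  unfolding linear_conv_bounded_linear[symmetric]
  by (rule linearI)
     (simp_all add: B_op_def ad.add_right ad.scaleR_right linear_add[OF linear_pr_p_formula]
       linear_scale[OF linear_pr_p_formula] algebra_simps)

lemma pr_p_ad_comp_p_eq:
  "w \<in> pset X \<Longrightarrow> pr_p X (ad (comp_p X xi) w) = pr_p_formula X (ad (comp_p X xi) w)"
  by (intro pr_p_eq_pr_p_formula ad_in_gset pset_subset_gset[of _ X] comp_p_in_pset)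

lemma B_op_in_pset: "w \<in> pset X \<Longrightarrow> B_op w \<in> pset X"
  unfolding B_op_def
  by (intro pset_add pset_scaleR ad_hset_pset[OF comp_h_in_hset] pr_p_formula_in_pset ad_in_gset
      pset_subset_gset[of _ X] comp_p_in_pset)

lemma ip_B_op:
  assumes u: "u \<in> pset X" and w: "w \<in> pset X"
  shows "ip (B_op u) w = - ip u (B_op w)"
proof -
  have "ad (comp_p X xi) u \<in> gset" "ad (comp_p X xi) w \<in> gset"
    using u w by (simp_all add: ad_in_gset pset_subset_gset[of _ X] comp_p_in_pset)
  thus ?thesis
    using ip_pr_p_formula u w
    by (simp add: B_op_def ip.add_left ip.add_right ip.scaleR_left ip.scaleR_right ip_ad_left
        ip_commute[of u])
qed

definition B_flow :: "real \<Rightarrow> ('n,'k) gl \<Rightarrow> ('n,'k) gl" where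
  "B_flow t = blinop_apply (exp (t *\<^sub>R - blinop_of B_op))"

lemma B_flow_in_pset:
  assumes v: "v \<in> pset X" shows "B_flow t v \<in> pset X"
proof -
  let ?A = "t *\<^sub>R - blinop_of B_op"
  have "(blinop_apply ?A ^^ m) v \<in> pset X" for m
    by (induction m)
       (simp_all add: v blinop_apply_scaleR_left blinop_apply_uminus_left B_op_in_pset
         blinop_apply_blinop_of[OF bounded_linear_B_op] pset_scaleR subspace_neg[OF subspace_pset])
  hence "(\<Sum>m<n. (1 / fact m) *\<^sub>R blinop_apply (?A ^ m) v) \<in> pset X" for n
    by (intro subspace_sum[OF subspace_pset]) (simp add: blinop_apply_power pset_scaleR)
  moreover have "(\<lambda>n. \<Sum>m<n. (1 / fact m) *\<^sub>R blinop_apply (?A ^ m) v) \<longlonglongrightarrow> B_flow t v"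
    using exp_blinop_apply_sums[of ?A v] by (simp add: B_flow_def sums_def)
  ultimately show ?thesis
    by (rule closed_sequentially[OF closed_subspace[OF subspace_pset]])
qed

lemma has_vector_derivative_B_flow:
  "((\<lambda>s. B_flow s v) has_vector_derivative - B_op (B_flow t v)) (at t)"
  using has_vector_derivative_exp_blinop_apply_left[of "- blinop_of B_op" v t]
  by (simp add: B_flow_def blinop_apply_uminus_left blinop_apply_blinop_of[OF bounded_linear_B_op])

lemma B_flow_inverse: "B_flow t (B_flow (- t) v) = v" "B_flow (- t) (B_flow t v) = v"
  using exp_blinop_apply_inverse[of t] exp_blinop_apply_inverse[of "- t"]
  by (simp_all add: B_flow_def)

lemma B_flow_zero: "B_flow 0 v = v"
  by (simp add: B_flow_def)

lemma linear_B_flow: "linear (B_flow t)"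
  unfolding B_flow_def by (rule bounded_linear.linear[OF bounded_linear_blinop_apply])

lemma ip_B_flow:
  assumes "u \<in> pset X" "v \<in> pset X"
  shows "ip (B_flow t u) (B_flow t v) = ip u v"
proof -
  have "ip (B_flow s u) (- B_op (B_flow s v)) + ip (- B_op (B_flow s u)) (B_flow s v) = 0" for s
    using ip_B_op[OF B_flow_in_pset B_flow_in_pset] assms by (simp add: ip.minus_left ip.minus_right)
  from bounded_bilinear_constant_if_derivatives_cancel[OF bounded_bilinear_ip
      has_vector_derivative_B_flow has_vector_derivative_B_flow this]
  show ?thesis by (simp add: B_flow_zero)
qed

lemma bij_betw_B_flow: "bij_betw (B_flow t) (pset X) (pset X)"
  by (rule bij_betw_byWitness[where f' = "B_flow (- t)"]) (auto simp: B_flow_inverse B_flow_in_pset)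

lemma opexp_generator_eq_B_flow:
  assumes "v \<in> pset X"
  shows "opexp (\<lambda>w. - t *\<^sub>R (ad (comp_h X xi) w + (1/2) *\<^sub>R pr_p X (ad (comp_p X xi) w))) v
         = B_flow t v"
    (is "opexp ?f v = _")
proof -
  have "(?f ^^ m) v = ((\<lambda>w. (- t) *\<^sub>R B_op w) ^^ m) v" for m
  proof (rule funpow_eq_on_invariant[where S = "pset X"])
    show "?f w = (- t) *\<^sub>R B_op w" if "w \<in> pset X" for w
      using that by (simp add: B_op_def pr_p_ad_comp_p_eq)
    show "(- t) *\<^sub>R B_op w \<in> pset X" if "w \<in> pset X" for w
      using that by (intro pset_scaleR B_op_in_pset)
  qed (rule assms)
  hence "opexp ?f v = opexp (\<lambda>w. (- t) *\<^sub>R B_op w) v"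
    by (simp add: opexp_def)
  also have "\<dots> = B_flow t v"
    unfolding opexp_eq_exp_blinop[OF bounded_linear_B_op] B_flow_def by simp
  finally show ?thesis .
qed

abbreviation h_exp :: "real \<Rightarrow> (real^'n^'n) \<times> (real^'k^'k)" where
  "h_exp t \<equiv> gexp (t *\<^sub>R comp_h X xi)"

lemma h_exp_in_stabilizer: "h_exp t \<in> stabilizer X"
  by (intro gexp_in_stabilizer hset_scaleR comp_h_in_hset)

lemma Ssol_eq:
  assumes "v \<in> pset X" shows "Ssol X xi t v = Ad_orth (h_exp t) (B_flow t v)"
  unfolding Ssol_def opexp_generator_eq_B_flow[OF assms]
  using h_exp_in_stabilizer[of t] by (simp add: Ad_eq_Ad_orth stabilizer_def)

lemma Ssol_in_pset: "v \<in> pset X \<Longrightarrow> Ssol X xi t v \<in> pset X"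
  by (simp add: Ssol_eq Ad_orth_in_pset h_exp_in_stabilizer B_flow_in_pset)

lemma Ssol_zero: "v \<in> pset X \<Longrightarrow> Ssol X xi 0 v = v"
  by (simp add: Ssol_eq B_flow_zero gexp_def mexp_zero Ad_orth_one)

lemma Ssol_in_Op: "Ssol X xi t \<in> Op X"
proof -
  have "bij_betw (Ad_orth (h_exp t) \<circ> B_flow t) (pset X) (pset X)"
    using bij_betw_trans[OF bij_betw_B_flow bij_betw_Ad_orth[OF h_exp_in_stabilizer]] .
  hence "bij_betw (Ssol X xi t) (pset X) (pset X)"
    by (rule bij_betw_cong[THEN iffD1, rotated]) (simp add: Ssol_eq)
  moreover have "ip (Ssol X xi t u) (Ssol X xi t v) = ip u v" if "u \<in> pset X" "v \<in> pset X" for u v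
    using that stabilizer_orthogonal[OF h_exp_in_stabilizer]
    by (simp add: Ssol_eq ip_Ad_orth B_flow_in_pset ip_B_flow)
  ultimately show ?thesis
    by (simp add: Op_def Ssol_eq pset_add pset_scaleR linear_add[OF linear_Ad_orth]
        linear_add[OF linear_B_flow] linear_scale[OF linear_Ad_orth] linear_scale[OF linear_B_flow])
qed

lemma Mrhs_eq:
  assumes "w \<in> gset"
  shows "Mrhs X xi t w = - (1/2) *\<^sub>R pr_p_formula X (ad (Ad_orth (h_exp t) (comp_p X xi)) w)"
proof -
  have "ad (Ad_orth (h_exp t) (comp_p X xi)) w \<in> gset"
    by (intro ad_in_gset Ad_orth_in_gset assms pset_subset_gset[OF comp_p_in_pset])
  thus ?thesis
    using h_exp_in_stabilizer[of t]
    by (simp add: Mrhs_def Ad_eq_Ad_orth stabilizer_def pr_p_eq_pr_p_formula)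
qed

lemma Mrhs_Ad_orth:
  assumes "w \<in> gset"
  shows "Mrhs X xi t (Ad_orth (h_exp t) w)
           = Ad_orth (h_exp t) (- (1/2) *\<^sub>R pr_p_formula X (ad (comp_p X xi) w))"
proof -
  have "ad (comp_p X xi) w \<in> gset"
    by (intro ad_in_gset assms pset_subset_gset[OF comp_p_in_pset])
  thus ?thesis
    using assms h_exp_in_stabilizer[of t] stabilizer_orthogonal[OF h_exp_in_stabilizer[of t]]
    by (simp add: Mrhs_eq Ad_orth_in_gset pr_p_formula_Ad_orth linear_scale[OF linear_Ad_orth]
        linear_neg[OF linear_Ad_orth] flip: Ad_orth_ad)
qed

lemma has_vector_derivative_Ad_orth_h_exp_B_flow:
  "((\<lambda>s. Ad_orth (h_exp s) (B_flow s v)) has_vector_derivative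
     Ad_orth (h_exp t) (ad (comp_h X xi) (B_flow t v) - B_op (B_flow t v))) (at t)"
proof -
  have skew: "skew (fst (comp_h X xi))" "skew (snd (comp_h X xi))"
    using comp_h_in_hset by (simp_all add: hset_iff)
  have "((\<lambda>s. fst (B_flow s v)) has_vector_derivative fst (- B_op (B_flow t v))) (at t)"
    "((\<lambda>s. snd (B_flow s v)) has_vector_derivative snd (- B_op (B_flow t v))) (at t)"
    by (rule bounded_linear.has_vector_derivative[OF bounded_linear_fst has_vector_derivative_B_flow]
        bounded_linear.has_vector_derivative[OF bounded_linear_snd has_vector_derivative_B_flow])+
  from has_vector_derivative_Pair[OF
      has_vector_derivative_conj_transpose[OF has_vector_derivative_mexp skew(1) this(1)]
      has_vector_derivative_conj_transpose[OF has_vector_derivative_mexp skew(2) this(2)]]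
  show ?thesis by (simp add: Ad_orth_def gexp_def ad_def)
qed

lemma has_vector_derivative_Ssol:
  assumes "v \<in> pset X"
  shows "((\<lambda>s. Ssol X xi s v) has_vector_derivative Mrhs X xi t (Ssol X xi t v)) (at t)"
proof -
  have "ad (comp_h X xi) (B_flow t v) - B_op (B_flow t v)
      = - (1/2) *\<^sub>R pr_p_formula X (ad (comp_p X xi) (B_flow t v))"
    by (simp add: B_op_def)
  thus ?thesis
    using has_vector_derivative_Ad_orth_h_exp_B_flow[of v t]
      Mrhs_Ad_orth[OF pset_subset_gset[OF B_flow_in_pset[OF assms]], of t]
    by (simp add: Ssol_eq[OF assms])
qed

lemma Mrhs_diff:
  assumes "a \<in> gset" "b \<in> gset"
  shows "Mrhs X xi t a - Mrhs X xi t b = Mrhs X xi t (a - b)"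
  using assms
  by (simp add: Mrhs_eq gset_diff ad.diff_right linear_diff[OF linear_pr_p_formula] algebra_simps)

lemma ip_Mrhs_self:
  assumes "w \<in> pset X" shows "ip (Mrhs X xi t w) w = 0"
proof -
  let ?c = "Ad_orth (h_exp t) (comp_p X xi)"
  have "ad ?c w \<in> gset"
    by (intro ad_in_gset Ad_orth_in_gset pset_subset_gset[OF assms] pset_subset_gset[OF comp_p_in_pset])
  moreover have "ip (ad ?c w) w = 0"
    using ip_ad_left[of ?c w w] ip_commute[of w] by simp
  ultimately show ?thesis
    using assms by (simp add: Mrhs_eq pset_subset_gset ip.minus_left ip.scaleR_left ip_pr_p_formula)
qed

lemma Ssol_unique:
  assumes T0: "\<forall>v\<in>pset X. T 0 v = v"
    and T: "\<forall>t. \<forall>v\<in>pset X. T t v \<in> pset X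
              \<and> ((\<lambda>s. T s v) has_vector_derivative Mrhs X xi t (T t v)) (at t)"
    and v: "v \<in> pset X"
  shows "T t v = Ssol X xi t v"
proof -
  define D where "D s = T s v - Ssol X xi s v" for s
  have D_pset: "D s \<in> pset X" for s
    using T v by (simp add: D_def pset_diff Ssol_in_pset)
  have "(D has_vector_derivative Mrhs X xi s (T s v) - Mrhs X xi s (Ssol X xi s v)) (at s)" for s
    unfolding D_def using T v by (intro has_vector_derivative_diff has_vector_derivative_Ssol) auto
  hence D': "(D has_vector_derivative Mrhs X xi s (D s)) (at s)" for s
    using T v by (simp add: Mrhs_diff D_def pset_subset_gset[of _ X] Ssol_in_pset)
  have "ip (D t) (D t) = ip (D 0) (D 0)"
    by (intro bounded_bilinear_constant_if_derivatives_cancel[OF bounded_bilinear_ip D' D'])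
       (metis ip_Mrhs_self[OF D_pset] ip_commute add_0)
  also have "\<dots> = 0"
    using T0 v by (simp add: D_def Ssol_zero ip.zero_left)
  finally have "D t = 0" by (rule pset_ip_self_eq_0[OF D_pset])
  thus ?thesis by (simp add: D_def)
qed

end

theorem lemma5p14:
  fixes X :: "real^'k^'n" and xi :: "('n,'k) gl"
  assumes "X \<in> stiefel" and "xi \<in> gset"
  shows "(\<forall>t. Ssol X xi t \<in> Op X)
       \<and> (\<forall>v\<in>pset X. Ssol X xi 0 v = v)
       \<and> (\<forall>t. \<forall>v\<in>pset X. ((\<lambda>s. Ssol X xi s v) has_vector_derivative
              Mrhs X xi t (Ssol X xi t v)) (at t))
       \<and> (\<forall>T :: real \<Rightarrow> ('n,'k) gl \<Rightarrow> ('n,'k) gl.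
            (\<forall>v\<in>pset X. T 0 v = v)
            \<and> (\<forall>t. \<forall>v\<in>pset X. T t v \<in> pset X
                 \<and> ((\<lambda>s. T s v) has_vector_derivative Mrhs X xi t (T t v)) (at t))
            \<longrightarrow> (\<forall>t. \<forall>v\<in>pset X. T t v = Ssol X xi t v))"
proof -
  interpret stiefel_ode X xi
    using assms by unfold_locales (simp_all add: stiefel_def)
  show ?thesis
    using Ssol_in_Op Ssol_zero has_vector_derivative_Ssol Ssol_unique by blast
qed

end
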